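(* Suppose there exists a $\pi_p$-bounded element $\xi\in G$. If $f\in L^p(G,V)$ satisfies $\pi(\xi)f=f$, then $f=0$ almost everywhere.
   Context: $G$ is a locally compact second countable group with left Haar measure $\mu$; $(\pi_0,V)$ is a continuous representation of $G$ on a separable Banach space $V$; for $p>1$, $\pi$ acts on the Bochner space $L^p(G,V)$ by $(\pi(g)f)(h)=\pi_0(g)(f(hg))$. An element $\xi\in G$ is $\pi_p$-bounded if the semigroup $\{\xi^n:n>0\}$ is not relatively compact and $\sup_{n>0}|||\pi(\xi^n)|||_{L^p(G,V)}<\infty$. *)

theory Defs
  imports "HOL-Analysis.Analysis"
begin

definition topological_group :: "('g::{monoid_mult,inverse,topological_space}) itself \<Rightarrow> bool" where
  "topological_group _ \<longleftrightarrow>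
     (\<forall>x::'g. inverse x * x = 1 \<and> x * inverse x = 1) \<and>
     continuous_on (UNIV :: ('g \<times> 'g) set) (\<lambda>(x,y). x * y) \<and>
     continuous_on (UNIV :: 'g set) inverse"

definition left_haar_measure :: "('g::{monoid_mult,topological_space}) measure \<Rightarrow> bool" where
  "left_haar_measure M \<longleftrightarrow>
     sets M = sets borel \<and>
     (\<forall>K. compact K \<longrightarrow> emeasure M K < \<infinity>) \<and>
     (\<forall>U. open U \<longrightarrow> U \<noteq> {} \<longrightarrow> emeasure M U > 0) \<and>
     (\<forall>A \<in> sets borel. emeasure M A = (INF U \<in> {U. open U \<and> A \<subseteq> U}. emeasure M U)) \<and>
     (\<forall>U. open U \<longrightarrow> emeasure M U = (SUP K \<in> {K. compact K \<and> K \<subseteq> U}. emeasure M K)) \<and>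
     (\<forall>g. \<forall>A \<in> sets borel. emeasure M ((\<lambda>h. g * h) ` A) = emeasure M A)"

definition continuous_representation ::
    "('g::{monoid_mult,topological_space} \<Rightarrow> 'v::real_normed_vector \<Rightarrow> 'v) \<Rightarrow> bool" where
  "continuous_representation \<pi>0 \<longleftrightarrow>
     (\<forall>g. bounded_linear (\<pi>0 g)) \<and>
     \<pi>0 1 = id \<and>
     (\<forall>g h. \<pi>0 (g * h) = \<pi>0 g \<circ> \<pi>0 h) \<and>
     (\<forall>v. continuous_on UNIV (\<lambda>g. \<pi>0 g v))"

text \<open>The Bochner space L^p(G,V) (as a set of representatives).\<close>
definition Lp_space :: "'g measure \<Rightarrow> real \<Rightarrow> ('g \<Rightarrow> 'v::{banach,second_countable_topology}) set" where
  "Lp_space M p = {f. f \<in> borel_measurable M \<and> integrable M (\<lambda>x. norm (f x) powr p)}"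

definition Lp_pow :: "'g measure \<Rightarrow> real \<Rightarrow> ('g \<Rightarrow> 'v::real_normed_vector) \<Rightarrow> ennreal" where
  "Lp_pow M p f = (\<integral>\<^sup>+ x. ennreal (norm (f x) powr p) \<partial>M)"

definition pi_rep :: "('g::monoid_mult \<Rightarrow> 'v \<Rightarrow> 'v) \<Rightarrow> 'g \<Rightarrow> ('g \<Rightarrow> 'v) \<Rightarrow> ('g \<Rightarrow> 'v)" where
  "pi_rep \<pi>0 g f = (\<lambda>h. \<pi>0 g (f (h * g)))"

text \<open>xi is pi_p-bounded: the forward semigroup is not relatively compact and
  sup_{n>0} |||pi(xi^n)|||_{L^p} < infinity, i.e. there is C with
  ||pi(xi^n) f||_p^p <= C ||f||_p^p for all n > 0 and f in L^p.\<close>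
definition pi_p_bounded ::
    "'g::{monoid_mult,topological_space} measure \<Rightarrow> real \<Rightarrow> ('g \<Rightarrow> 'v::{banach,second_countable_topology} \<Rightarrow> 'v) \<Rightarrow> 'g \<Rightarrow> bool" where
  "pi_p_bounded M p \<pi>0 \<xi> \<longleftrightarrow>
     \<not> compact (closure {\<xi> ^ n | n. n > 0}) \<and>
     (\<exists>C::real. C \<ge> 0 \<and> (\<forall>n>0. \<forall>f \<in> Lp_space M p.
        Lp_pow M p (pi_rep \<pi>0 (\<xi> ^ n) f) \<le> ennreal C * Lp_pow M p f))"

end

theory Submission
  imports Defs
begin

text \<open>
  Iterating \<open>\<pi>(\<xi>) f = f\<close> gives \<open>\<pi>(\<xi>\<^sup>n) f = f\<close> for all \<open>n > 0\<close>. Given a compact set \<open>K\<close>,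
  the powers of \<xi> are not relatively compact, so they leave the compact set \<open>K\<inverse>K\<close>:
  some \<open>\<xi>\<^sup>n\<close> translates \<open>K\<close> off itself. Since \<open>(\<pi>(\<xi>\<^sup>n) f)(h) = \<pi>\<^sub>0(\<xi>\<^sup>n) f(h\<xi>\<^sup>n)\<close> agrees
  with \<open>\<pi>(\<xi>\<^sup>n)(f\<chi>\<^bsub>G-K\<^esub>)\<close> on \<open>K\<close>, the uniform bound \<open>C\<close> on the operators \<open>\<pi>(\<xi>\<^sup>n)\<close> yields
  \<open>\<parallel>f\<chi>\<^sub>K\<parallel>\<^sub>p\<^sup>p \<le> C \<parallel>f\<chi>\<^bsub>G-K\<^esub>\<parallel>\<^sub>p\<^sup>p\<close>, i.e. \<open>\<parallel>f\<chi>\<^sub>K\<parallel>\<^sub>p\<^sup>p \<le> C/(1+C) \<parallel>f\<parallel>\<^sub>p\<^sup>p\<close>. Exhausting \<open>G\<close> by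
  compact sets gives \<open>\<parallel>f\<parallel>\<^sub>p\<^sup>p \<le> C/(1+C) \<parallel>f\<parallel>\<^sub>p\<^sup>p\<close>, hence \<open>f = 0\<close>.
\<close>

lemma topological_group_inverse_mult_cancel:
  assumes "topological_group TYPE('g::{monoid_mult,inverse,topological_space})"
  shows "inverse (h::'g) * (h * x) = x"
  using assms unfolding topological_group_def by (metis mult.assoc mult_1_left)

lemma topological_group_continuous_on_mult_right:
  assumes "topological_group TYPE('g::{monoid_mult,inverse,topological_space})"
  shows "continuous_on UNIV (\<lambda>h::'g. h * a)"
proof -
  have mult: "continuous_on (UNIV :: ('g \<times> 'g) set) (\<lambda>(x,y). x * y)"
    using assms unfolding topological_group_def by auto
  have "continuous_on UNIV ((\<lambda>(x,y). x * y) \<circ> (\<lambda>h::'g. (h, a)))"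
    by (rule continuous_on_compose)
      (auto intro!: continuous_intros mult[THEN continuous_on_subset])
  then show ?thesis by (simp add: o_def)
qed

lemma topological_group_continuous_on_inverse_mult:
  assumes "topological_group TYPE('g::{monoid_mult,inverse,topological_space})"
  shows "continuous_on UNIV (\<lambda>(a::'g, b). inverse a * b)"
proof -
  have mult: "continuous_on (UNIV :: ('g \<times> 'g) set) (\<lambda>(x,y). x * y)"
    and inv: "continuous_on (UNIV :: 'g set) inverse"
    using assms unfolding topological_group_def by auto
  have "continuous_on UNIV (\<lambda>z::'g\<times>'g. (inverse (fst z), snd z))"
    by (intro continuous_intros continuous_on_compose2[OF inv]) auto
  then have "continuous_on UNIV ((\<lambda>(x,y). x * y) \<circ> (\<lambda>z::'g\<times>'g. (inverse (fst z), snd z)))"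
    by (rule continuous_on_compose) (auto intro: mult[THEN continuous_on_subset])
  then show ?thesis by (simp add: o_def case_prod_beta)
qed

lemma topological_group_compact_right_translate_disjoint:
  assumes tg: "topological_group TYPE('g::{monoid_mult,inverse,t2_space})"
    and K: "compact (K::'g set)"
    and S: "\<not> compact (closure S)"
  obtains s where "s \<in> S" "\<forall>h\<in>K. h * s \<notin> K"
proof -
  define D where "D = (\<lambda>(a, b). inverse a * b) ` (K \<times> K)"
  have "compact D"
    unfolding D_def
    by (rule compact_continuous_image[OF continuous_on_subset[OF
          topological_group_continuous_on_inverse_mult[OF tg]] compact_Times[OF K K]]) simp
  have "\<not> S \<subseteq> D"
  proof
    assume "S \<subseteq> D"
    then have "closure S \<subseteq> D"
      using \<open>compact D\<close> by (simp add: closure_minimal compact_imp_closed)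
    then have "compact (closure S)"
      using compact_Int_closed[OF \<open>compact D\<close> closed_closure, of S] by (simp add: Int_absorb1)
    then show False
      using S by blast
  qed
  then obtain s where "s \<in> S" "s \<notin> D" by blast
  moreover have "h * s \<notin> K" if "h \<in> K" for h
  proof
    assume "h * s \<in> K"
    then have "inverse h * (h * s) \<in> D"
      unfolding D_def using \<open>h \<in> K\<close> by (intro image_eqI[where x="(h, h * s)"]) auto
    then show False
      using \<open>s \<notin> D\<close> by (simp add: topological_group_inverse_mult_cancel[OF tg])
  qed
  ultimately show ?thesis using that by blast
qed

lemma locally_compact_second_countable_exhaustion:
  assumes "locally_compact_space (euclidean :: 'a topology)"
  obtains K :: "nat \<Rightarrow> ('a::second_countable_topology) set"
  where "incseq K" "\<And>m. compact (K m)" "(\<Union>m. K m) = UNIV"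
proof -
  have "\<forall>x::'a. \<exists>U C. open U \<and> compact C \<and> x \<in> U \<and> U \<subseteq> C"
    using assms unfolding locally_compact_space_def by (simp add: openin_open_eq)
  then obtain U C where UC: "\<And>x::'a. open (U x) \<and> compact (C x) \<and> x \<in> U x \<and> U x \<subseteq> C x"
    by metis
  have "\<And>S. S \<in> range U \<Longrightarrow> open S" using UC by blast
  then obtain F where F: "F \<subseteq> range U" "countable F" "\<Union>F = \<Union>(range U)"
    by (rule Lindelof)
  then obtain X where X: "countable X" "F = U ` X"
    by (metis countable_subset_image subset_UNIV)
  have cover: "\<Union>(U ` X) = UNIV"
    using F(3) X(2) UC by blast
  then have "range (from_nat_into X) = X"
    using X(1) by (intro range_from_nat_into) auto
  define K where "K m = (\<Union>i\<le>m. C (from_nat_into X i))" for m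
  show ?thesis
  proof
    show "incseq K" unfolding K_def incseq_def by (intro allI impI UN_mono) auto
    show "compact (K m)" for m unfolding K_def using UC by (intro compact_UN) auto
    have "x \<in> (\<Union>m. K m)" for x
    proof -
      obtain i where "x \<in> U (from_nat_into X i)"
        using cover \<open>range (from_nat_into X) = X\<close> by (metis UNIV_I UN_E rangeE)
      then have "x \<in> K i" unfolding K_def using UC by blast
      then show ?thesis by blast
    qed
    then show "(\<Union>m. K m) = UNIV" by blast
  qed
qed

lemma topological_group_measurable_mult_right:
  assumes "topological_group TYPE('g::{monoid_mult,inverse,topological_space})"
    and "sets M = sets (borel :: 'g measure)"
  shows "(\<lambda>h::'g. h * a) \<in> measurable M M"
  using borel_measurable_continuous_onI[OF topological_group_continuous_on_mult_right[OF assms(1)]]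
    measurable_cong_sets[OF assms(2) assms(2)] by simp

lemma continuous_representation_apply_nonzero:
  assumes "topological_group TYPE('g::{monoid_mult,inverse,topological_space})"
    and "continuous_representation (\<pi>0 :: 'g \<Rightarrow> 'v::real_normed_vector \<Rightarrow> 'v)"
    and "v \<noteq> 0"
  shows "\<pi>0 a v \<noteq> 0"
proof
  assume "\<pi>0 a v = 0"
  have "v = \<pi>0 (inverse a * a) v"
    using assms(1,2) unfolding topological_group_def continuous_representation_def by simp
  also have "\<dots> = \<pi>0 (inverse a) 0"
    using assms(2) \<open>\<pi>0 a v = 0\<close> unfolding continuous_representation_def by simp
  also have "\<dots> = 0"
    using assms(2) unfolding continuous_representation_def by (simp add: linear_simps)
  finally show False using \<open>v \<noteq> 0\<close> by simp
qed

lemma pi_rep_mult: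
  assumes "continuous_representation \<pi>0"
  shows "pi_rep \<pi>0 (a * b) f = pi_rep \<pi>0 a (pi_rep \<pi>0 b f)"
  using assms unfolding continuous_representation_def pi_rep_def by (simp add: mult.assoc)

lemma integrable_norm_indicator_scaleR_powr:
  fixes f :: "'a \<Rightarrow> 'b::real_normed_vector"
  assumes "integrable M (\<lambda>h. indicator S h * norm (f h) powr p)"
  shows "integrable M (\<lambda>h. norm (indicator S h *\<^sub>R f h) powr p)"
proof -
  have "(\<lambda>h. norm (indicator S h *\<^sub>R f h) powr p) = (\<lambda>h. indicator S h * norm (f h) powr p)"
    by (auto split: split_indicator)
  then show ?thesis using assms by simp
qed

lemma Lp_pow_indicator_scaleR:
  "Lp_pow M p (\<lambda>h. indicator S h *\<^sub>R f h) = (\<integral>\<^sup>+ h. ennreal (norm (f h) powr p) * indicator S h \<partial>M)"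
  unfolding Lp_pow_def by (intro nn_integral_cong) (simp split: split_indicator)

text \<open>
  Right translations need not preserve Haar measure (the group need not be unimodular), but
  the bound on \<open>\<pi>(a)\<close>, tested on \<open>\<chi>\<^sub>N v\<close>, shows that they preserve null sets.
\<close>

lemma Lp_bounded_pi_rep_AE_mult_right:
  fixes M :: "('g::{monoid_mult,inverse,topological_space}) measure"
    and \<pi>0 :: "'g \<Rightarrow> 'v::{banach,second_countable_topology} \<Rightarrow> 'v"
  assumes tg: "topological_group TYPE('g)"
    and sets_M: "sets M = sets (borel :: 'g measure)"
    and rep: "continuous_representation \<pi>0"
    and bounded: "\<And>u. u \<in> Lp_space M p \<Longrightarrow> Lp_pow M p (pi_rep \<pi>0 a u) \<le> ennreal C * Lp_pow M p u"
    and v: "(v::'v) \<noteq> 0"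
    and "AE h in M. P h"
  shows "AE h in M. P (h * a)"
proof -
  obtain N where N: "{x \<in> space M. \<not> P x} \<subseteq> N" "emeasure M N = 0" "N \<in> sets M"
    using \<open>AE h in M. P h\<close> by (rule AE_E)
  have space_M: "space M = UNIV" using sets_eq_imp_space_eq[OF sets_M] by simp
  define u where "u h = indicator N h *\<^sub>R v" for h
  have "integrable M (\<lambda>h. norm (u h) powr p)"
    unfolding u_def using N(2,3)
    by (intro integrable_norm_indicator_scaleR_powr integrable_mult_left integrable_real_indicator) auto
  moreover have "u \<in> borel_measurable M"
    unfolding u_def using N(3) by measurable
  ultimately have "u \<in> Lp_space M p"
    unfolding Lp_space_def by simp
  moreover have "Lp_pow M p u = 0"
    using N(2,3) unfolding u_def Lp_pow_indicator_scaleR by (simp add: nn_integral_cmult_indicator)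
  ultimately have translate_null: "Lp_pow M p (pi_rep \<pi>0 a u) = 0"
    using bounded by (metis le_zero_eq mult_zero_right)
  define S where "S = (\<lambda>h. h * a) -` N"
  have "S \<in> sets M"
    using measurable_sets[OF topological_group_measurable_mult_right[OF tg sets_M] N(3)]
    by (simp add: S_def space_M)
  have "pi_rep \<pi>0 a u = (\<lambda>h. indicator S h *\<^sub>R \<pi>0 a v)"
    using rep unfolding continuous_representation_def pi_rep_def u_def S_def
    by (auto simp: linear_simps split: split_indicator)
  then have "ennreal (norm (\<pi>0 a v) powr p) * emeasure M S = 0"
    using translate_null \<open>S \<in> sets M\<close>
    by (simp add: Lp_pow_indicator_scaleR nn_integral_cmult_indicator)
  then have "S \<in> null_sets M"
    using continuous_representation_apply_nonzero[OF tg rep v] \<open>S \<in> sets M\<close> by auto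
  moreover have "{x \<in> space M. \<not> P (x * a)} \<subseteq> S"
    using N(1) unfolding S_def space_M by auto
  ultimately show ?thesis by (rule AE_I')
qed

lemma pi_rep_power_AE_fixed:
  assumes rep: "continuous_representation \<pi>0"
    and translate: "\<And>n P. n > 0 \<Longrightarrow> AE h in M. P h \<Longrightarrow> AE h in M. P (h * \<xi> ^ n)"
    and fixed: "AE h in M. pi_rep \<pi>0 \<xi> f h = f h"
    and "n > 0"
  shows "AE h in M. pi_rep \<pi>0 (\<xi> ^ n) f h = f h"
  using \<open>n > 0\<close>
proof (induction n rule: nat_induct_non_zero)
  case 1
  show ?case using fixed by simp
next
  case (Suc n)
  have "AE h in M. pi_rep \<pi>0 \<xi> f (h * \<xi> ^ n) = f (h * \<xi> ^ n)"
    using translate[OF Suc.hyps fixed] .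
  with Suc.IH show ?case
  proof eventually_elim
    case (elim h)
    have "pi_rep \<pi>0 (\<xi> ^ Suc n) f h = pi_rep \<pi>0 (\<xi> ^ n) (pi_rep \<pi>0 \<xi> f) h"
      by (subst power_Suc2) (rule pi_rep_mult[OF rep, THEN fun_cong])
    also have "\<dots> = pi_rep \<pi>0 (\<xi> ^ n) f h"
      using elim(2) by (simp add: pi_rep_def)
    finally show ?case using elim(1) by simp
  qed
qed

lemma Lp_pow_fixed_indicator_le_complement:
  fixes M :: "('g::monoid_mult) measure" and f :: "'g \<Rightarrow> 'v::{banach,second_countable_topology}"
  assumes f: "f \<in> Lp_space M p"
    and K: "K \<in> sets M"
    and space_M: "space M = UNIV"
    and translate_off: "\<forall>h\<in>K. h * a \<notin> K"
    and fixed: "AE h in M. pi_rep \<pi>0 a f h = f h"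
    and bounded: "\<And>u. u \<in> Lp_space M p \<Longrightarrow> Lp_pow M p (pi_rep \<pi>0 a u) \<le> ennreal C * Lp_pow M p u"
  shows "Lp_pow M p (\<lambda>h. indicator K h *\<^sub>R f h) \<le> ennreal C * Lp_pow M p (\<lambda>h. indicator (- K) h *\<^sub>R f h)"
proof -
  define u where "u h = indicator (- K) h *\<^sub>R f h" for h
  have "- K \<in> sets M"
    using K space_M by (metis Compl_eq_Diff_UNIV sets.compl_sets)
  then have "integrable M (\<lambda>h. norm (u h) powr p)"
    using f integrable_mult_indicator[of "- K" M "\<lambda>h. norm (f h) powr p"]
    unfolding u_def Lp_space_def by (intro integrable_norm_indicator_scaleR_powr) simp
  moreover have "f \<in> borel_measurable M"
    using f unfolding Lp_space_def by simp
  then have "u \<in> borel_measurable M"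
    unfolding u_def using \<open>- K \<in> sets M\<close> by measurable
  ultimately have "u \<in> Lp_space M p"
    unfolding Lp_space_def by simp
  have "AE h in M. indicator K h *\<^sub>R f h = indicator K h *\<^sub>R pi_rep \<pi>0 a u h"
    using fixed by eventually_elim (auto simp: pi_rep_def u_def translate_off split: split_indicator)
  then have "Lp_pow M p (\<lambda>h. indicator K h *\<^sub>R f h)
      = Lp_pow M p (\<lambda>h. indicator K h *\<^sub>R pi_rep \<pi>0 a u h)"
    unfolding Lp_pow_def by (intro nn_integral_cong_AE) auto
  also have "\<dots> \<le> Lp_pow M p (pi_rep \<pi>0 a u)"
    unfolding Lp_pow_def by (intro nn_integral_mono) (simp split: split_indicator)
  also have "\<dots> \<le> ennreal C * Lp_pow M p u"
    using bounded[OF \<open>u \<in> Lp_space M p\<close>] .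
  finally show ?thesis unfolding u_def .
qed

lemma emeasure_space_eq_0_if_le_complement:
  fixes N :: "'a measure" and K :: "nat \<Rightarrow> 'a set" and C :: real
  assumes finite: "emeasure N (space N) \<noteq> \<infinity>"
    and K: "incseq K" "range K \<subseteq> sets N" "(\<Union>m. K m) = space N"
    and C: "C \<ge> 0"
    and le: "\<And>m. emeasure N (K m) \<le> ennreal C * emeasure N (space N - K m)"
  shows "emeasure N (space N) = 0"
proof -
  interpret finite_measure N
    using finite by (rule finite_measureI)
  define t where "t = measure N (space N)"
  have bound: "measure N (K m) \<le> C * t / (1 + C)" for m
  proof -
    have "measure N (K m) \<le> C * measure N (space N - K m)"
      using le[of m] C by (simp add: emeasure_eq_measure ennreal_mult'[symmetric])
    also have "\<dots> = C * (t - measure N (K m))"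
      using K(2) by (simp add: t_def finite_measure_compl)
    finally show ?thesis
      using C by (simp add: pos_le_divide_eq algebra_simps)
  qed
  have "(\<lambda>m. measure N (K m)) \<longlonglongrightarrow> t"
    using finite_Lim_measure_incseq[OF K(2,1)] K(3) by (simp add: t_def)
  then have "t \<le> C * t / (1 + C)"
    by (rule LIMSEQ_le_const2) (simp add: bound)
  then have "t = 0"
    using C measure_nonneg[of N "space N"] by (simp add: t_def pos_le_divide_eq algebra_simps)
  then show ?thesis
    by (simp add: t_def emeasure_eq_measure)
qed

lemma Lp_space_AE_eq_0_if_compact_le_complement:
  fixes M :: "('a::{t2_space,second_countable_topology}) measure" and f :: "'a \<Rightarrow> 'v::{banach,second_countable_topology}"
  assumes lc: "locally_compact_space (euclidean :: 'a topology)"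
    and sets_M: "sets M = sets borel"
    and f: "f \<in> Lp_space M p"
    and "C \<ge> 0"
    and compact_le: "\<And>K. compact K \<Longrightarrow>
      Lp_pow M p (\<lambda>h. indicator K h *\<^sub>R f h) \<le> ennreal C * Lp_pow M p (\<lambda>h. indicator (- K) h *\<^sub>R f h)"
  shows "AE h in M. f h = 0"
proof -
  have space_M: "space M = UNIV"
    using sets_eq_imp_space_eq[OF sets_M] by simp
  define \<nu> where "\<nu> = density M (\<lambda>h. ennreal (norm (f h) powr p))"
  have f_measurable: "f \<in> borel_measurable M"
    and "integrable M (\<lambda>h. norm (f h) powr p)"
    using f unfolding Lp_space_def by auto
  have density_measurable: "(\<lambda>h. ennreal (norm (f h) powr p)) \<in> borel_measurable M"
    using f_measurable by measurable
  have emeasure_\<nu>: "emeasure \<nu> S = Lp_pow M p (\<lambda>h. indicator S h *\<^sub>R f h)" if "S \<in> sets M" for S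
    unfolding \<nu>_def Lp_pow_indicator_scaleR by (rule emeasure_density[OF density_measurable that])
  obtain K :: "nat \<Rightarrow> 'a set" where K: "incseq K" "\<And>m. compact (K m)" "(\<Union>m. K m) = UNIV"
    using locally_compact_second_countable_exhaustion[OF lc] by blast
  have space_\<nu>: "space \<nu> = UNIV" and sets_\<nu>: "sets \<nu> = sets M"
    by (simp_all add: \<nu>_def space_M)
  have K_sets: "K m \<in> sets M" for m
    using K(2) sets_M by (simp add: compact_imp_closed borel_closed)
  have "emeasure \<nu> (space \<nu>) = 0"
  proof (rule emeasure_space_eq_0_if_le_complement[OF _ K(1) _ _ \<open>C \<ge> 0\<close>])
    show "emeasure \<nu> (space \<nu>) \<noteq> \<infinity>"
      using \<open>integrable M _\<close> emeasure_\<nu>[OF sets.top]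
      by (simp add: space_\<nu> space_M Lp_pow_def integrable_iff_bounded less_top)
    show "range K \<subseteq> sets \<nu>"
      using K_sets by (auto simp only: sets_\<nu>)
    show "(\<Union>m. K m) = space \<nu>"
      using K(3) by (simp only: space_\<nu>)
    show "emeasure \<nu> (K m) \<le> ennreal C * emeasure \<nu> (space \<nu> - K m)" for m
    proof -
      have "- K m \<in> sets M"
        using sets.compl_sets[OF K_sets[of m]] by (simp only: space_M Compl_eq_Diff_UNIV)
      then show ?thesis
        using compact_le[OF K(2)] emeasure_\<nu>[OF K_sets[of m]] emeasure_\<nu>[of "- K m"]
        by (simp only: space_\<nu> Compl_eq_Diff_UNIV[symmetric])
    qed
  qed
  then have "AE h in M. ennreal (norm (f h) powr p) = 0"
    using emeasure_\<nu>[OF sets.top] nn_integral_0_iff_AE[OF density_measurable]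
    by (simp add: space_\<nu> space_M Lp_pow_def)
  then show ?thesis by simp
qed

theorem lemma2:
  fixes M :: "('g::{monoid_mult,inverse,t2_space,second_countable_topology}) measure"
    and \<pi>0 :: "'g \<Rightarrow> 'v::{banach,second_countable_topology} \<Rightarrow> 'v"
    and p :: real and \<xi> :: 'g and f :: "'g \<Rightarrow> 'v"
  assumes "topological_group TYPE('g)"
    and "locally_compact_space (euclidean :: 'g topology)"
    and "left_haar_measure M"
    and "continuous_representation \<pi>0"
    and "p > 1"
    and "pi_p_bounded M p \<pi>0 \<xi>"
    and "f \<in> Lp_space M p"
    and "AE h in M. pi_rep \<pi>0 \<xi> f h = f h"
  shows "AE h in M. f h = 0"
proof (cases "\<exists>v::'v. v \<noteq> 0")
  case False
  then show ?thesis by auto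
next
  case True
  then obtain v :: 'v where "v \<noteq> 0" by blast
  note tg = assms(1) and rep = assms(4) and f = assms(7)
  have sets_M: "sets M = sets (borel :: 'g measure)"
    using assms(3) unfolding left_haar_measure_def by auto
  then have space_M: "space M = UNIV"
    using sets_eq_imp_space_eq[OF sets_M] by simp
  have powers_not_compact: "\<not> compact (closure {\<xi> ^ n | n. n > 0})"
    using assms(6) unfolding pi_p_bounded_def by blast
  obtain C where "C \<ge> 0" and bounded: "\<And>n u. n > 0 \<Longrightarrow> u \<in> Lp_space M p \<Longrightarrow>
      Lp_pow M p (pi_rep \<pi>0 (\<xi> ^ n) u) \<le> ennreal C * Lp_pow M p u"
    using assms(6) unfolding pi_p_bounded_def by blast
  have fixed: "AE h in M. pi_rep \<pi>0 (\<xi> ^ n) f h = f h" if "n > 0" for n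
    using rep Lp_bounded_pi_rep_AE_mult_right[OF tg sets_M rep bounded \<open>v \<noteq> 0\<close>] assms(8) that
    by (rule pi_rep_power_AE_fixed)
  have compact_part_le: "Lp_pow M p (\<lambda>h. indicator K h *\<^sub>R f h)
      \<le> ennreal C * Lp_pow M p (\<lambda>h. indicator (- K) h *\<^sub>R f h)" if "compact K" for K
  proof -
    obtain s where "s \<in> {\<xi> ^ n | n. n > 0}" and off: "\<forall>h\<in>K. h * s \<notin> K"
      by (rule topological_group_compact_right_translate_disjoint[OF tg \<open>compact K\<close> powers_not_compact])
    then obtain n where "n > 0" "s = \<xi> ^ n" by blast
    have "K \<in> sets M"
      using \<open>compact K\<close> sets_M by (simp add: compact_imp_closed borel_closed)
    show ?thesis
      using off \<open>s = \<xi> ^ n\<close>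
      by (intro Lp_pow_fixed_indicator_le_complement[OF f \<open>K \<in> sets M\<close> space_M _
            fixed[OF \<open>n > 0\<close>] bounded[OF \<open>n > 0\<close>]]) simp
  qed
  show ?thesis
    by (rule Lp_space_AE_eq_0_if_compact_le_complement[OF assms(2) sets_M f \<open>C \<ge> 0\<close> compact_part_le])
qed

end
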